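(* Let $n\ge2$ and let $\varphi$ be a skew morphism of $\mathbb{Z}_n$ with odd complexity and auto-order $m$. Then $\varphi$ is uniquely determined by the triple $(\varphi(1),\varphi',\varphi^m)$: if $\psi$ is any skew morphism of $\mathbb{Z}_n$ with odd complexity such that $\psi(1)=\varphi(1)$, $\psi'=\varphi'$ and $\psi^m=\varphi^m$, then $\psi=\varphi$.
   Context: $\mathbb{Z}_n$ is the cyclic group of integers modulo $n$. A skew morphism of a finite group $G$ is a permutation $\varphi$ of $G$ fixing the identity such that for each $a\in G$ there is a non-negative integer $i_a$ with $\varphi(ab)=\varphi(a)\varphi^{i_a}(b)$ for all $b\in G$. ${\rm ord}(\varphi)$ is the order of $\langle\varphi\rangle$. If $\varphi$ is non-trivial, $\pi_\varphi(a)$ is the unique such $i_a\in\{1,\dots,{\rm ord}(\varphi)-1\}$; if $\varphi$ is the identity, $\pi_\varphi(a)=1$. Let $\sigma_\varphi(x,y)=\sum_{i=0}^{x-1}\pi_\varphi(\varphi^i(y))\in\mathbb{Z}_{{\rm ord}(\varphi)}$. The derived skew morphism $\varphi'$ of a skew morphism $\varphi$ of $\mathbb{Z}_n$ is the skew morphism of $\mathbb{Z}_{{\rm ord}(\varphi)}$ given by $\varphi'(a)=\sigma_\varphi(a,1)$. Set $\varphi^{(0)}=\varphi$, $\varphi^{(i+1)}=(\varphi^{(i)})'$. For $n\ge 2$ the complexity of $\varphi$ is the unique non-negative integer $c$ such that $\varphi^{(c)}$ is a skew morphism of a non-trivial cyclic group $\mathbb{Z}_m$ and $\varphi^{(c+1)}$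 is a skew morphism of $\mathbb{Z}_1$; $m$ is the auto-order of $\varphi$. *)

theory Defs
  imports Main
begin

text \<open>The cyclic group Z_n is represented by the carrier {..<n} of naturals with
addition modulo n (identity 0). A map on Z_n is a function nat => nat; only its
values on {..<n} matter.\<close>

definition skew_morphism :: "nat \<Rightarrow> (nat \<Rightarrow> nat) \<Rightarrow> bool" where
  "skew_morphism n \<phi> \<longleftrightarrow> 1 \<le> n \<and> bij_betw \<phi> {..<n} {..<n} \<and> \<phi> 0 = 0 \<and>
     (\<forall>a<n. \<exists>i::nat. \<forall>b<n. \<phi> ((a + b) mod n) = (\<phi> a + (\<phi> ^^ i) b) mod n)"

definition skew_ord :: "nat \<Rightarrow> (nat \<Rightarrow> nat) \<Rightarrow> nat" where
  "skew_ord n \<phi> = (LEAST k. 0 < k \<and> (\<forall>x<n. (\<phi> ^^ k) x = x))"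

definition skew_pi :: "nat \<Rightarrow> (nat \<Rightarrow> nat) \<Rightarrow> nat \<Rightarrow> nat" where
  "skew_pi n \<phi> a = (if \<forall>x<n. \<phi> x = x then 1 else
     (THE i. i \<in> {1..<skew_ord n \<phi>} \<and>
        (\<forall>b<n. \<phi> ((a + b) mod n) = (\<phi> a + (\<phi> ^^ i) b) mod n)))"

definition skew_sigma :: "nat \<Rightarrow> (nat \<Rightarrow> nat) \<Rightarrow> nat \<Rightarrow> nat \<Rightarrow> nat" where
  "skew_sigma n \<phi> x y = (\<Sum>i<x. skew_pi n \<phi> ((\<phi> ^^ i) y)) mod skew_ord n \<phi>"

text \<open>The derived skew morphism phi' of Z_ord(phi): phi'(a) = sigma_phi(a,1).
 (The element 1 of Z_n is 1 mod n.)\<close>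
definition derived :: "nat \<Rightarrow> (nat \<Rightarrow> nat) \<Rightarrow> (nat \<Rightarrow> nat)" where
  "derived n \<phi> = (\<lambda>a. skew_sigma n \<phi> a (1 mod n))"

text \<open>Iterated derivation: (size of the cyclic group, map) for phi^(k).\<close>
fun derived_iter :: "nat \<Rightarrow> (nat \<Rightarrow> nat) \<Rightarrow> nat \<Rightarrow> nat \<times> (nat \<Rightarrow> nat)" where
  "derived_iter n \<phi> 0 = (n, \<phi>)"
| "derived_iter n \<phi> (Suc k) =
     (case derived_iter n \<phi> k of (m, f) \<Rightarrow> (skew_ord m f, derived m f))"

definition complexity :: "nat \<Rightarrow> (nat \<Rightarrow> nat) \<Rightarrow> nat" where
  "complexity n \<phi> = (THE c. 2 \<le> fst (derived_iter n \<phi> c) \<and> fst (derived_iter n \<phi> (Suc c)) = 1)"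

definition auto_order :: "nat \<Rightarrow> (nat \<Rightarrow> nat) \<Rightarrow> nat" where
  "auto_order n \<phi> = fst (derived_iter n \<phi> (complexity n \<phi>))"

end

theory Submission
  imports Defs "HOL-Library.FuncSet"
begin

text \<open>
  Every skew
  morphism of \<open>Z\<^sub>n\<close> satisfies \<open>\<phi> x = (\<Sum>i<x. \<phi>\<^bsup>\<pi> i\<^esup> 1) mod n\<close> with
  \<open>\<pi> i = \<phi>'\<^bsup>i\<^esup> 1\<close>, so \<open>\<phi>\<close> is determined by \<open>\<phi>'\<close> and the values of the powers of \<open>\<phi>\<close>
  at 1. Two steps down the chain of derived skew morphisms, \<open>\<phi>\<^bsup>a\<^esup> 1\<close> reduces modulo
  \<open>ord \<phi>'\<close> to \<open>\<phi>''\<^bsup>a\<^esup> 1\<close>, and \<open>ord \<phi>'\<close> divides \<open>n\<close>. The last member of the chain is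
  the identity on \<open>Z\<^sub>m\<close>, so descending from it in steps of two, an odd complexity gives
  \<open>\<phi>'\<^bsup>a\<^esup> 1 \<equiv> 1 (mod m)\<close> for all \<open>a\<close>. Every exponent \<open>e\<close> that occurs therefore has the
  form \<open>q m + 1\<close>, and \<open>\<phi>\<^bsup>e\<^esup> 1 = (\<phi>\<^bsup>m\<^esup>)\<^bsup>q\<^esup> (\<phi> 1)\<close> depends only on \<open>\<phi>\<^bsup>m\<^esup>\<close> and \<open>\<phi> 1\<close>.

  That the chain reaches \<open>Z\<^sub>1\<close> at all rests on \<open>ord \<phi> < n\<close>: the orbit of 1 avoids 0,
  so its length \<open>L\<close> is less than \<open>n\<close>, and \<open>\<phi>\<^bsup>L\<^esup>\<close> is the identity because \<open>\<phi>'\<close>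
  preserves the multiples of \<open>L\<close>.
\<close>

lemma mod_add_left_cancel_less:
  fixes a x y q :: nat
  assumes "(a + x) mod q = (a + y) mod q" "x < q" "y < q"
  shows "x = y"
proof -
  have "int ((a + x) mod q) = int ((a + y) mod q)" using assms(1) by simp
  then have "(int a + int x) mod int q = (int a + int y) mod int q" by (simp add: zmod_int)
  then have "int x mod int q = int y mod int q"
    by (metis add.commute add_diff_cancel_right' mod_diff_left_eq)
  then show ?thesis using assms(2,3) by (simp add: zmod_int[symmetric])
qed

lemma funpow_image_subset: "f ` A \<subseteq> A \<Longrightarrow> (f ^^ k) ` A \<subseteq> A"
  by (induction k) auto

lemma funpow_eq_on_invariant:
  assumes "\<forall>y\<in>A. g y = h y" "h ` A \<subseteq> A" "x \<in> A"
  shows "(g ^^ k) x = (h ^^ k) x"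
proof -
  have "(g ^^ k) x = (h ^^ k) x \<and> (h ^^ k) x \<in> A"
    by (induction k) (use assms in auto)
  then show ?thesis ..
qed

lemma funpow_eq_if_mod_eq_1:
  fixes \<phi> \<psi> :: "nat \<Rightarrow> nat"
  assumes "\<forall>y<n. (\<psi> ^^ m) y = (\<phi> ^^ m) y" "\<phi> ` {..<n} \<subseteq> {..<n}"
    and "\<psi> x = \<phi> x" "\<phi> x < n" "e mod m = 1"
  shows "(\<psi> ^^ e) x = (\<phi> ^^ e) x"
proof -
  define q where "q = e div m"
  have e: "e = m * q + 1" using assms(5) unfolding q_def by (metis mod_mult_div_eq add.commute)
  have split: "(f ^^ e) x = ((f ^^ m) ^^ q) (f x)" for f :: "nat \<Rightarrow> nat"
    unfolding e funpow_mult by (simp add: funpow_swap1)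
  have "((\<psi> ^^ m) ^^ q) (\<phi> x) = ((\<phi> ^^ m) ^^ q) (\<phi> x)"
    using funpow_image_subset[OF assms(2), of m] assms(1,4)
    by (intro funpow_eq_on_invariant[of "{..<n}"]) auto
  then show ?thesis using assms(3) split by simp
qed

lemma derived_iter_Suc:
  "fst (derived_iter n \<phi> (Suc j)) = skew_ord (fst (derived_iter n \<phi> j)) (snd (derived_iter n \<phi> j))"
  "snd (derived_iter n \<phi> (Suc j)) = derived (fst (derived_iter n \<phi> j)) (snd (derived_iter n \<phi> j))"
  by (simp_all split: prod.split)

declare derived_iter.simps(2)[simp del]

section \<open>Orders and power functions\<close>

locale skew =
  fixes n :: nat and \<phi> :: "nat \<Rightarrow> nat"
  assumes skew_morphism: "skew_morphism n \<phi>"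
begin

abbreviation ord where "ord \<equiv> skew_ord n \<phi>"
abbreviation \<pi> where "\<pi> \<equiv> skew_pi n \<phi>"
abbreviation \<phi>' where "\<phi>' \<equiv> derived n \<phi>"

abbreviation \<sigma> :: "nat \<Rightarrow> nat \<Rightarrow> nat" where "\<sigma> k a \<equiv> \<Sum>i<k. \<pi> ((\<phi> ^^ i) a)"

definition skew_exponent :: "nat \<Rightarrow> nat \<Rightarrow> bool" where
  "skew_exponent a i \<longleftrightarrow> (\<forall>b<n. \<phi> ((a + b) mod n) = (\<phi> a + (\<phi> ^^ i) b) mod n)"

lemma n_pos: "0 < n"
  and bij: "bij_betw \<phi> {..<n} {..<n}"
  and zero: "\<phi> 0 = 0"
  and ex_skew_exponent: "a < n \<Longrightarrow> \<exists>i. skew_exponent a i"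
  using skew_morphism unfolding skew_morphism_def skew_exponent_def by auto

lemma less_n: "x < n \<Longrightarrow> \<phi> x < n"
  using bij by (auto simp: bij_betw_def)

lemma funpow_less_n: "x < n \<Longrightarrow> (\<phi> ^^ k) x < n"
  by (induction k) (auto simp: less_n)

lemma funpow_zero: "(\<phi> ^^ k) 0 = 0"
  by (induction k) (auto simp: zero)

lemma inj_on_funpow: "inj_on (\<phi> ^^ k) {..<n}"
proof (induction k)
  case (Suc k)
  have "inj_on \<phi> ((\<phi> ^^ k) ` {..<n})"
    using bij funpow_less_n by (auto simp: bij_betw_def intro: inj_on_subset)
  then show ?case using Suc comp_inj_on[of "\<phi> ^^ k" "{..<n}" \<phi>] by (simp add: comp_def)
qed simp

lemma funpow_cancel: "x < n \<Longrightarrow> y < n \<Longrightarrow> (\<phi> ^^ k) x = (\<phi> ^^ k) y \<Longrightarrow> x = y"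
  using inj_on_funpow[of k] by (auto simp: inj_on_def)

lemma ex_funpow_id: "\<exists>k>0. \<forall>x<n. (\<phi> ^^ k) x = x"
proof -
  define R where "R k = restrict (\<phi> ^^ k) {..<n}" for k
  have "R k \<in> {..<n} \<rightarrow>\<^sub>E {..<n}" for k
    unfolding R_def by (rule restrict_PiE_iff[THEN iffD2]) (auto simp: funpow_less_n)
  then have "range R \<subseteq> {..<n} \<rightarrow>\<^sub>E {..<n}" by blast
  then have "finite (range R)" by (rule finite_subset) (simp add: finite_PiE)
  then have "\<not> inj R" using finite_imageD infinite_UNIV_nat by blast
  then obtain a b where ab: "a < b" "R a = R b"
    by (metis injI linorder_neqE_nat)
  have "(\<phi> ^^ (b - a)) x = x" if x: "x < n" for x
  proof -
    have "(\<phi> ^^ a) ((\<phi> ^^ (b - a)) x) = (\<phi> ^^ b) x"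
      using ab(1) by (metis funpow_add le_add_diff_inverse less_imp_le o_apply)
    also have "\<dots> = (\<phi> ^^ a) x"
      using ab(2) x unfolding R_def by (metis lessThan_iff restrict_apply')
    finally show ?thesis using funpow_cancel x funpow_less_n by blast
  qed
  then show ?thesis using ab(1) by (intro exI[of _ "b - a"]) auto
qed

lemma ord_pos: "0 < ord"
  and funpow_ord: "x < n \<Longrightarrow> (\<phi> ^^ ord) x = x"
  using LeastI_ex[OF ex_funpow_id] unfolding skew_ord_def by auto

lemma ord_le: "0 < k \<Longrightarrow> \<forall>x<n. (\<phi> ^^ k) x = x \<Longrightarrow> ord \<le> k"
  unfolding skew_ord_def by (rule Least_le) auto

lemma funpow_mod_ord: "x < n \<Longrightarrow> (\<phi> ^^ (k mod ord)) x = (\<phi> ^^ k) x"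
  by (intro funpow_mod_eq funpow_ord)

lemma ord_dvd:
  assumes "\<forall>x<n. (\<phi> ^^ d) x = x"
  shows "ord dvd d"
proof -
  have "\<forall>x<n. (\<phi> ^^ (d mod ord)) x = x" using assms funpow_mod_ord by simp
  then have "d mod ord = 0"
    using ord_le[of "d mod ord"] ord_pos by (metis mod_less_divisor neq0_conv not_le)
  then show ?thesis by (simp add: dvd_eq_mod_eq_0)
qed

lemma mod_ord_eq_if_funpow_eq:
  assumes "\<forall>x<n. (\<phi> ^^ j) x = (\<phi> ^^ k) x"
  shows "j mod ord = k mod ord"
proof -
  have "i mod ord = l mod ord" if il: "i \<le> l" "\<forall>x<n. (\<phi> ^^ i) x = (\<phi> ^^ l) x" for i l
  proof -
    have "(\<phi> ^^ (l - i)) x = x" if x: "x < n" for x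
    proof -
      have "(\<phi> ^^ i) ((\<phi> ^^ (l - i)) x) = (\<phi> ^^ i) x"
        using il x by (metis funpow_add le_add_diff_inverse o_apply)
      then show ?thesis using funpow_cancel funpow_less_n x by blast
    qed
    then have "ord dvd l - i" by (simp add: ord_dvd)
    then have "l mod ord = i mod ord" using mod_eq_dvd_iff_nat[OF il(1)] by blast
    then show ?thesis by simp
  qed
  then show ?thesis using assms by (metis nat_le_linear)
qed

lemma skew_exponent_mod_unique:
  assumes "skew_exponent a i" "skew_exponent a j"
  shows "i mod ord = j mod ord"
proof -
  have "(\<phi> ^^ i) x = (\<phi> ^^ j) x" if x: "x < n" for x
    using assms x funpow_less_n mod_add_left_cancel_less[of "\<phi> a" "(\<phi> ^^ i) x" n]
    unfolding skew_exponent_def by metis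
  then show ?thesis by (simp add: mod_ord_eq_if_funpow_eq)
qed

lemma ord_eq_1_iff: "ord = 1 \<longleftrightarrow> (\<forall>x<n. \<phi> x = x)"
proof
  show "\<forall>x<n. \<phi> x = x" if "ord = 1" using funpow_ord that by simp
  show "\<forall>x<n. \<phi> x = x \<Longrightarrow> ord = 1" using ord_le[of 1] ord_pos by simp
qed

lemma ord_eq_1_if_n_eq_1: "n = 1 \<Longrightarrow> ord = 1"
  using ord_eq_1_iff zero by auto

lemma skew_exponent_0_imp_id:
  assumes a: "a < n" and "skew_exponent a 0" and x: "x < n"
  shows "\<phi> x = x"
proof -
  have shift: "\<phi> ((a + b) mod n) = (\<phi> a + b) mod n" if "b < n" for b
    using assms that by (simp add: skew_exponent_def)
  define b where "b = (n - a) mod n"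
  have "(a + b) mod n = 0"
    using a by (simp add: b_def mod_add_right_eq)
  then have "(\<phi> a + b) mod n = (a + b) mod n"
    using shift[of b] zero n_pos by (simp add: b_def)
  then have fa: "\<phi> a = a"
    using mod_add_left_cancel_less[of b "\<phi> a" n a] less_n a by (simp add: add.commute)
  define c where "c = (x + n - a) mod n"
  have "(a + c) mod n = x"
    using a x by (simp add: c_def mod_add_right_eq)
  then show ?thesis using shift[of c] fa n_pos by (simp add: c_def)
qed

lemma pi_skew_exponent_bounds:
  assumes a: "a < n"
  shows "skew_exponent a (\<pi> a) \<and> (2 \<le> ord \<longrightarrow> 1 \<le> \<pi> a \<and> \<pi> a < ord)"
proof (cases "\<forall>x<n. \<phi> x = x")
  case True
  then have "\<pi> a = 1" by (simp add: skew_pi_def)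
  then show ?thesis using True ord_eq_1_iff a less_n by (simp add: skew_exponent_def)
next
  case nontrivial: False
  obtain i where "skew_exponent a i" using ex_skew_exponent a by blast
  then have i: "skew_exponent a (i mod ord)"
    by (simp add: skew_exponent_def funpow_mod_ord)
  have "i mod ord \<noteq> 0"
  proof
    assume "i mod ord = 0"
    then have "\<forall>x<n. \<phi> x = x" using i skew_exponent_0_imp_id[OF a] by simp
    then show False using nontrivial by blast
  qed
  then have range: "i mod ord \<in> {1..<ord}" using ord_pos by simp
  have "(THE j. j \<in> {1..<ord} \<and> skew_exponent a j) = i mod ord"
  proof (rule the_equality)
    fix j assume "j \<in> {1..<ord} \<and> skew_exponent a j"
    then show "j = i mod ord" using skew_exponent_mod_unique[OF i, of j] by simp
  qed (use range i in simp)
  moreover have "\<pi> a = (THE j. j \<in> {1..<ord} \<and> skew_exponent a j)"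
    unfolding skew_pi_def skew_exponent_def by (simp only: if_not_P[OF nontrivial])
  ultimately have "\<pi> a = i mod ord" by simp
  then show ?thesis using range i by simp
qed

lemma pi_skew_exponent: "a < n \<Longrightarrow> skew_exponent a (\<pi> a)"
  and pi_bounds: "2 \<le> ord \<Longrightarrow> a < n \<Longrightarrow> 1 \<le> \<pi> a \<and> \<pi> a < ord"
  using pi_skew_exponent_bounds by blast+

lemma pi_zero: "\<pi> 0 = 1"
proof (cases "\<forall>x<n. \<phi> x = x")
  case True
  then show ?thesis by (simp add: skew_pi_def)
next
  case False
  then have "ord \<noteq> 1" using ord_eq_1_iff by blast
  then have ord2: "2 \<le> ord" using ord_pos by simp
  have "skew_exponent 0 1" using zero by (simp add: skew_exponent_def less_n)
  then have "\<pi> 0 mod ord = 1 mod ord"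
    using skew_exponent_mod_unique pi_skew_exponent n_pos by blast
  then show ?thesis using pi_bounds[OF ord2, of 0] n_pos ord2 by simp
qed

lemma funpow_skew:
  assumes a: "a < n" and b: "b < n"
  shows "(\<phi> ^^ k) ((a + b) mod n) = ((\<phi> ^^ k) a + (\<phi> ^^ \<sigma> k a) b) mod n"
proof (induction k)
  case (Suc k)
  have "(\<phi> ^^ Suc k) ((a + b) mod n) = \<phi> (((\<phi> ^^ k) a + (\<phi> ^^ \<sigma> k a) b) mod n)"
    using Suc by simp
  also have "\<dots> = (\<phi> ((\<phi> ^^ k) a) + (\<phi> ^^ \<pi> ((\<phi> ^^ k) a)) ((\<phi> ^^ \<sigma> k a) b)) mod n"
    using pi_skew_exponent funpow_less_n a b unfolding skew_exponent_def by blast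
  also have "(\<phi> ^^ \<pi> ((\<phi> ^^ k) a)) ((\<phi> ^^ \<sigma> k a) b) = (\<phi> ^^ \<sigma> (Suc k) a) b"
    by (simp add: funpow_add add.commute)
  finally show ?case by simp
qed (use a b in simp)

lemma sigma_mod_ord_eq_if_funpow_eq:
  assumes a: "a < n" and eq: "\<forall>x<n. (\<phi> ^^ j) x = (\<phi> ^^ k) x"
  shows "\<sigma> j a mod ord = \<sigma> k a mod ord"
proof -
  have "(\<phi> ^^ \<sigma> j a) x = (\<phi> ^^ \<sigma> k a) x" if x: "x < n" for x
  proof -
    have "((\<phi> ^^ j) a + (\<phi> ^^ \<sigma> j a) x) mod n = ((\<phi> ^^ j) a + (\<phi> ^^ \<sigma> k a) x) mod n"
      using funpow_skew[OF a x, of j] funpow_skew[OF a x, of k] eq a n_pos by simp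
    then show ?thesis using mod_add_left_cancel_less funpow_less_n x by blast
  qed
  then show ?thesis by (simp add: mod_ord_eq_if_funpow_eq)
qed

lemma sigma_mod_ord: "a < n \<Longrightarrow> \<sigma> (k mod ord) a mod ord = \<sigma> k a mod ord"
  using sigma_mod_ord_eq_if_funpow_eq funpow_mod_ord by blast

lemma sigma_cocycle:
  assumes y: "y < n" and z: "z < n"
  shows "\<sigma> k ((y + z) mod n) mod ord = \<sigma> (\<sigma> k y) z mod ord"
proof -
  have "(\<phi> ^^ \<sigma> k ((y + z) mod n)) w = (\<phi> ^^ \<sigma> (\<sigma> k y) z) w" if w: "w < n" for w
  proof -
    let ?X = "(\<phi> ^^ k) y + (\<phi> ^^ \<sigma> k y) z"
    have "(\<phi> ^^ k) (((y + z) mod n + w) mod n) = (?X + (\<phi> ^^ \<sigma> k ((y + z) mod n)) w) mod n"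
      using funpow_skew[OF _ w, of "(y + z) mod n" k] funpow_skew[OF y z, of k] n_pos
      by (simp add: mod_add_left_eq)
    moreover have "(\<phi> ^^ k) ((y + (z + w) mod n) mod n) = (?X + (\<phi> ^^ \<sigma> (\<sigma> k y) z) w) mod n"
      using funpow_skew[OF y _, of "(z + w) mod n" k] funpow_skew[OF z w, of "\<sigma> k y"] n_pos
      by (simp add: mod_add_right_eq add.assoc)
    moreover have "((y + z) mod n + w) mod n = (y + (z + w) mod n) mod n"
      by (simp add: add.assoc mod_add_left_eq mod_add_right_eq)
    ultimately show ?thesis
      using mod_add_left_cancel_less[of ?X] funpow_less_n w by metis
  qed
  then show ?thesis by (simp add: mod_ord_eq_if_funpow_eq)
qed

lemma funpow_eq_sum:
  assumes n2: "2 \<le> n" and x: "x < n"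
  shows "(\<phi> ^^ k) x = (\<Sum>i<x. (\<phi> ^^ \<sigma> k i) 1) mod n"
  using x
proof (induction x)
  case (Suc i)
  have "(\<phi> ^^ k) (Suc i) = (\<phi> ^^ k) ((i + 1) mod n)" using Suc by simp
  also have "\<dots> = ((\<phi> ^^ k) i + (\<phi> ^^ \<sigma> k i) 1) mod n"
    using funpow_skew[of i 1] Suc n2 by simp
  finally show ?case using Suc by (simp add: mod_add_left_eq)
qed (simp add: funpow_zero)

section \<open>The derived skew morphism\<close>

lemma derived_eq: "2 \<le> n \<Longrightarrow> \<phi>' a = \<sigma> a 1 mod ord"
  by (simp add: derived_def skew_sigma_def)

lemma derived_less: "2 \<le> n \<Longrightarrow> \<phi>' a < ord"
  using derived_eq ord_pos by simp

lemma derived_zero: "\<phi>' 0 = 0"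
  by (simp add: derived_def skew_sigma_def)

lemma sigma_add: "\<sigma> (a + b) y = \<sigma> a y + \<sigma> b ((\<phi> ^^ a) y)"
proof (induction b)
  case (Suc b)
  have "(\<phi> ^^ (a + b)) y = (\<phi> ^^ b) ((\<phi> ^^ a) y)"
    by (metis add.commute comp_apply funpow_add)
  then show ?case using Suc by simp
qed simp

lemma sigma_zero: "\<sigma> k 0 = k"
  by (simp add: funpow_zero pi_zero)

lemma sigma_mod_ord_eq_derived_funpow:
  assumes n2: "2 \<le> n" and y: "y < n"
  shows "\<sigma> k y mod ord = (\<phi>' ^^ y) (k mod ord)"
  using y
proof (induction y)
  case (Suc y)
  have "\<sigma> k (Suc y) mod ord = \<sigma> (\<sigma> k y) 1 mod ord"
    using sigma_cocycle[of y 1 k] Suc n2 by simp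
  also have "\<dots> = \<phi>' (\<sigma> k y mod ord)"
    using sigma_mod_ord[of 1 "\<sigma> k y"] derived_eq n2 by simp
  finally show ?case using Suc by simp
qed (simp add: sigma_zero)

lemma derived_funpow_n:
  assumes n2: "2 \<le> n" and k: "k < ord"
  shows "(\<phi>' ^^ n) k = k"
proof -
  have "k = \<sigma> k ((n - 1 + 1) mod n) mod ord" using k n2 by (simp add: sigma_zero)
  also have "\<dots> = \<sigma> (\<sigma> k (n - 1)) 1 mod ord" using sigma_cocycle[of "n - 1" 1 k] n2 by simp
  also have "\<dots> = \<phi>' (\<sigma> k (n - 1) mod ord)"
    using sigma_mod_ord[of 1 "\<sigma> k (n - 1)"] derived_eq[OF n2] n2 by simp
  also have "\<dots> = \<phi>' ((\<phi>' ^^ (n - 1)) k)"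
    using sigma_mod_ord_eq_derived_funpow[OF n2, of "n - 1" k] k n2 by simp
  also have "\<dots> = (\<phi>' ^^ n) k" using n2 by (cases n) simp_all
  finally show ?thesis by simp
qed

lemma derived_skew_exponent:
  assumes n2: "2 \<le> n" and a: "a < ord" and b: "b < ord"
  shows "\<phi>' ((a + b) mod ord) = (\<phi>' a + (\<phi>' ^^ (\<phi> ^^ a) 1) b) mod ord"
proof -
  have "\<phi>' ((a + b) mod ord) = \<sigma> (a + b) 1 mod ord"
    using derived_eq[OF n2] sigma_mod_ord[of 1 "a + b"] n2 by simp
  also have "\<dots> = (\<sigma> a 1 mod ord + \<sigma> b ((\<phi> ^^ a) 1) mod ord) mod ord"
    by (simp add: sigma_add mod_add_eq)
  also have "\<sigma> b ((\<phi> ^^ a) 1) mod ord = (\<phi>' ^^ (\<phi> ^^ a) 1) b"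
    using sigma_mod_ord_eq_derived_funpow[OF n2, of "(\<phi> ^^ a) 1" b] funpow_less_n b n2 by simp
  finally show ?thesis using derived_eq[OF n2, of a] by simp
qed

lemma skew_morphism_derived: "skew_morphism ord \<phi>'"
proof (cases "2 \<le> n")
  case n2: True
  obtain m where m: "n = Suc m" using n2 by (cases n) auto
  have "inj_on \<phi>' {..<ord}"
  proof (rule inj_onI)
    fix x y assume "x \<in> {..<ord}" "y \<in> {..<ord}" "\<phi>' x = \<phi>' y"
    then have "(\<phi>' ^^ n) x = (\<phi>' ^^ n) y" by (simp add: m funpow_swap1)
    then show "x = y" using derived_funpow_n[OF n2] \<open>x \<in> _\<close> \<open>y \<in> _\<close> by simp
  qed
  moreover have "\<phi>' ` {..<ord} \<subseteq> {..<ord}" using derived_less n2 by auto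
  ultimately have "bij_betw \<phi>' {..<ord} {..<ord}"
    by (simp add: bij_betw_def endo_inj_surj)
  then show ?thesis unfolding skew_morphism_def
    using ord_pos derived_zero derived_skew_exponent[OF n2] by (auto intro!: exI[of _ "(\<phi> ^^ _) 1"])
next
  case False
  then have "ord = 1" using n_pos ord_eq_1_if_n_eq_1 by simp
  then show ?thesis using derived_zero by (simp add: skew_morphism_def bij_betw_def lessThan_Suc)
qed

lemma pi_eq_derived_funpow:
  assumes "2 \<le> n" "2 \<le> ord" "x < n"
  shows "\<pi> x = (\<phi>' ^^ x) 1"
  using sigma_mod_ord_eq_derived_funpow[of x 1] pi_bounds assms by simp

lemma eq_sum_derived_orbit:
  assumes "2 \<le> n" "2 \<le> ord" "x < n"
  shows "\<phi> x = (\<Sum>i<x. (\<phi> ^^ (\<phi>' ^^ i) 1) 1) mod n"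
  using funpow_eq_sum[of x 1] pi_eq_derived_funpow assms by simp

lemma derived_ord_dvd_n:
  assumes n2: "2 \<le> n"
  shows "skew_ord ord \<phi>' dvd n"
proof -
  interpret D: skew ord \<phi>' using skew_morphism_derived by unfold_locales
  show ?thesis using derived_funpow_n[OF n2] by (simp add: D.ord_dvd)
qed

text \<open>Both sides are the power function of \<open>\<phi>'\<close> at \<open>a mod ord\<close>: the left one by
  \<open>derived_skew_exponent\<close>, the right one by \<open>pi_eq_derived_funpow\<close> applied to \<open>\<phi>'\<close>.\<close>
lemma funpow_one_mod_derived_ord:
  assumes n2: "2 \<le> n" and ord2: "2 \<le> ord" and dord2: "2 \<le> skew_ord ord \<phi>'"
  shows "(\<phi> ^^ a) 1 mod skew_ord ord \<phi>' = (derived ord \<phi>' ^^ a) 1"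
proof -
  interpret D: skew ord \<phi>' using skew_morphism_derived by unfold_locales
  define a' where "a' = a mod ord"
  have a': "a' < ord" using ord_pos a'_def by simp
  have "D.skew_exponent a' ((\<phi> ^^ a') 1)"
    unfolding D.skew_exponent_def using derived_skew_exponent[OF n2 a'] by blast
  then have "(\<phi> ^^ a') 1 mod D.ord = D.\<pi> a' mod D.ord"
    using D.skew_exponent_mod_unique D.pi_skew_exponent a' by blast
  also have "\<dots> = (D.\<phi>' ^^ a') 1"
    using D.pi_bounds[OF dord2 a'] D.pi_eq_derived_funpow[OF ord2 dord2 a'] by simp
  also have "(D.\<phi>' ^^ a') 1 = (D.\<phi>' ^^ a) 1"
    unfolding a'_def using D.derived_funpow_n[OF ord2, of 1] dord2 by (simp add: funpow_mod_eq)
  finally show ?thesis using funpow_mod_ord[of 1 a] n2 by (simp add: a'_def)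
qed

section \<open>The order is less than the size of the group\<close>

definition orbit_length_one :: nat where
  "orbit_length_one = (LEAST l. 0 < l \<and> (\<phi> ^^ l) 1 = 1)"

context
  assumes n2: "2 \<le> n"
begin

lemma orbit_length_one: "0 < orbit_length_one" "(\<phi> ^^ orbit_length_one) 1 = 1"
  and orbit_length_one_le_ord: "orbit_length_one \<le> ord"
proof -
  have ord: "0 < ord \<and> (\<phi> ^^ ord) 1 = 1" using ord_pos funpow_ord n2 by simp
  then show "0 < orbit_length_one" "(\<phi> ^^ orbit_length_one) 1 = 1"
    unfolding orbit_length_one_def by (metis (mono_tags, lifting) LeastI)+
  show "orbit_length_one \<le> ord"
    unfolding orbit_length_one_def using ord by (rule Least_le)
qed

lemma orbit_length_one_minimal: "0 < l \<Longrightarrow> l < orbit_length_one \<Longrightarrow> (\<phi> ^^ l) 1 \<noteq> 1"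
  unfolding orbit_length_one_def using not_less_Least by blast

lemma orbit_length_one_dvd_ord: "orbit_length_one dvd ord"
proof -
  have "(\<phi> ^^ (ord mod orbit_length_one)) 1 = 1"
    using funpow_mod_eq[OF orbit_length_one(2)] funpow_ord n2 by simp
  then have "ord mod orbit_length_one = 0"
    using orbit_length_one_minimal orbit_length_one(1) by (meson mod_less_divisor neq0_conv)
  then show ?thesis by (simp add: dvd_eq_mod_eq_0)
qed

lemma orbit_length_one_less_n: "orbit_length_one < n"
proof -
  have "inj_on (\<lambda>i. (\<phi> ^^ i) 1) {..<orbit_length_one}"
  proof (rule linorder_inj_onI')
    fix i j assume "i \<in> {..<orbit_length_one}" "j \<in> {..<orbit_length_one}" "i < j"
    show "(\<phi> ^^ i) 1 \<noteq> (\<phi> ^^ j) 1"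
    proof
      assume "(\<phi> ^^ i) 1 = (\<phi> ^^ j) 1"
      then have "(\<phi> ^^ i) ((\<phi> ^^ (j - i)) 1) = (\<phi> ^^ i) 1"
        using \<open>i < j\<close> by (metis funpow_add le_add_diff_inverse less_imp_le o_apply)
      then have "(\<phi> ^^ (j - i)) 1 = 1" using funpow_cancel funpow_less_n n2 by simp
      then show False using orbit_length_one_minimal[of "j - i"] \<open>i < j\<close> \<open>j \<in> _\<close>
        by (simp add: less_imp_diff_less)
    qed
  qed
  moreover have "(\<lambda>i. (\<phi> ^^ i) 1) ` {..<orbit_length_one} \<subseteq> {1..<n}"
    using funpow_less_n funpow_cancel[of 1 0] funpow_zero n2 by (fastforce simp: Suc_le_eq)
  ultimately have "card {..<orbit_length_one} \<le> card {1..<n}"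
    by (intro card_inj_on_le) auto
  then show ?thesis using n2 by simp
qed

text \<open>Since \<open>\<phi>\<close> has period \<open>orbit_length_one\<close> at 1, \<open>derived_skew_exponent\<close> shows that
  \<open>\<phi>'\<close> is additive at \<open>orbit_length_one\<close>.\<close>
lemma derived_mult_orbit_length_one:
  assumes less: "orbit_length_one < ord"
  shows "\<phi>' ((j * orbit_length_one) mod ord) = (j * \<phi>' orbit_length_one) mod ord"
proof (induction j)
  case (Suc j)
  have "\<phi>' ((Suc j * orbit_length_one) mod ord)
      = \<phi>' ((orbit_length_one + (j * orbit_length_one) mod ord) mod ord)"
    by (simp add: mod_add_right_eq)
  also have "\<dots> = (\<phi>' orbit_length_one + (j * \<phi>' orbit_length_one) mod ord) mod ord"
    using derived_skew_exponent[OF n2 less] orbit_length_one(2) ord_pos Suc by simp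
  finally show ?case by (simp add: mod_add_right_eq)
qed (simp add: derived_zero)

lemma orbit_length_one_dvd_derived:
  assumes less: "orbit_length_one < ord" and "orbit_length_one dvd x" "x < ord"
  shows "orbit_length_one dvd \<phi>' x"
proof -
  let ?L = orbit_length_one
  obtain q where q: "ord = q * ?L" using orbit_length_one_dvd_ord by (metis dvdE mult.commute)
  then have "(q * \<phi>' ?L) mod ord = 0"
    using derived_mult_orbit_length_one[OF less, of q] derived_zero by simp
  then have "q * ?L dvd q * \<phi>' ?L" using q by (simp add: dvd_eq_mod_eq_0)
  then have L_dvd: "?L dvd \<phi>' ?L" using q ord_pos by simp
  obtain j where "x = j * ?L" using assms(2) by (metis dvdE mult.commute)
  then have "\<phi>' x = (j * \<phi>' ?L) mod ord"
    using derived_mult_orbit_length_one[OF less, of j] assms(3) by simp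
  then show ?thesis using L_dvd orbit_length_one_dvd_ord by (simp add: dvd_mod)
qed

lemma funpow_orbit_length_one: "x < n \<Longrightarrow> (\<phi> ^^ orbit_length_one) x = x"
proof (cases "orbit_length_one = ord")
  case True
  then show "x < n \<Longrightarrow> ?thesis" using funpow_ord by simp
next
  case False
  let ?L = orbit_length_one
  have less: "?L < ord" using False orbit_length_one_le_ord by simp
  have invariant: "?L dvd (\<phi>' ^^ i) ?L \<and> (\<phi>' ^^ i) ?L < ord" for i
    by (induction i) (use less orbit_length_one_dvd_derived derived_less n2 in auto)
  have "(\<phi> ^^ \<sigma> ?L i) 1 = 1" if "i < n" for i
  proof -
    have "?L dvd \<sigma> ?L i mod ord"
      using invariant sigma_mod_ord_eq_derived_funpow[OF n2 that, of ?L] less by simp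
    then have "?L dvd \<sigma> ?L i" using orbit_length_one_dvd_ord by (simp add: dvd_mod_iff)
    then show ?thesis
      using funpow_mod_eq[OF orbit_length_one(2), of "\<sigma> ?L i"] by (simp add: dvd_eq_mod_eq_0)
  qed
  then show "x < n \<Longrightarrow> ?thesis" using funpow_eq_sum[OF n2, of x ?L] by simp
qed

lemma ord_less_n: "ord < n"
  using ord_le[of orbit_length_one] orbit_length_one(1) funpow_orbit_length_one
    orbit_length_one_less_n by fastforce

end

section \<open>The chain of derived skew morphisms\<close>

abbreviation chain_size where "chain_size j \<equiv> fst (derived_iter n \<phi> j)"
abbreviation chain_map where "chain_map j \<equiv> snd (derived_iter n \<phi> j)"

lemma skew_chain: "skew (chain_size j) (chain_map j)"
proof (induction j)
  case 0
  then show ?case by simp unfold_locales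
next
  case (Suc j)
  interpret C: skew "chain_size j" "chain_map j" by (rule Suc.IH)
  show ?case using C.skew_morphism_derived by unfold_locales (simp add: derived_iter_Suc)
qed

lemma chain_size_pos: "0 < chain_size j"
  using skew.n_pos[OF skew_chain] .

lemma chain_size_Suc_less: "2 \<le> chain_size j \<Longrightarrow> chain_size (Suc j) < chain_size j"
  using skew.ord_less_n[OF skew_chain] by (simp add: derived_iter_Suc)

lemma chain_size_Suc_eq_1: "chain_size j = 1 \<Longrightarrow> chain_size (Suc j) = 1"
  using skew.ord_eq_1_if_n_eq_1[OF skew_chain] by (simp add: derived_iter_Suc)

lemma chain_size_eq_1_mono:
  assumes "chain_size i = 1" "i \<le> j"
  shows "chain_size j = 1"
  using assms(2) by (induction j rule: dec_induct) (simp_all add: assms(1) chain_size_Suc_eq_1)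

lemma chain_size_n_eq_1: "chain_size n = 1"
proof -
  have "chain_size j + j \<le> n \<or> chain_size j = 1" for j
  proof (induction j)
    case (Suc j)
    then show ?case
      using chain_size_pos[of j] chain_size_Suc_less[of j] chain_size_Suc_eq_1[of j] by linarith
  qed simp
  from this[of n] show ?thesis using chain_size_pos[of n] by linarith
qed

lemma ex1_complexity:
  assumes n2: "2 \<le> n"
  shows "\<exists>!c. 2 \<le> chain_size c \<and> chain_size (Suc c) = 1"
proof
  define k where "k = (LEAST j. chain_size j = 1)"
  have k: "chain_size k = 1" unfolding k_def by (rule LeastI[of _ n]) (rule chain_size_n_eq_1)
  then have "k \<noteq> 0" using n2 by (cases k) auto
  then have "chain_size (k - 1) \<noteq> 1" unfolding k_def by (intro not_less_Least) simp
  then show c: "2 \<le> chain_size (k - 1) \<and> chain_size (Suc (k - 1)) = 1"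
    using chain_size_pos[of "k - 1"] k \<open>k \<noteq> 0\<close> by simp
  fix c' assume c': "2 \<le> chain_size c' \<and> chain_size (Suc c') = 1"
  have "\<not> c' < k - 1" using c c' chain_size_eq_1_mono[of "Suc c'" "k - 1"] by auto
  moreover have "\<not> k - 1 < c'" using c c' chain_size_eq_1_mono[of "Suc (k - 1)" c'] by auto
  ultimately show "c' = k - 1" by simp
qed

lemma chain_size_complexity:
  assumes "2 \<le> n"
  shows "2 \<le> chain_size (complexity n \<phi>)" "chain_size (Suc (complexity n \<phi>)) = 1"
  using theI'[OF ex1_complexity[OF assms]] unfolding complexity_def by auto

lemma chain_size_ge_2: "2 \<le> n \<Longrightarrow> j \<le> complexity n \<phi> \<Longrightarrow> 2 \<le> chain_size j"
  using chain_size_complexity chain_size_pos[of j] chain_size_eq_1_mono[of j "complexity n \<phi>"]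
  by fastforce

lemma chain_two_steps:
  assumes n2: "2 \<le> n" and j: "j + 2 \<le> complexity n \<phi>"
  shows "(chain_map j ^^ a) 1 mod chain_size (j + 2) = (chain_map (j + 2) ^^ a) 1"
    and "chain_size (j + 2) dvd chain_size j"
proof -
  interpret C: skew "chain_size j" "chain_map j" by (rule skew_chain)
  have sizes: "2 \<le> chain_size j" "2 \<le> chain_size (Suc j)" "2 \<le> chain_size (Suc (Suc j))"
    using chain_size_ge_2[OF n2] j by simp_all
  then show "(chain_map j ^^ a) 1 mod chain_size (j + 2) = (chain_map (j + 2) ^^ a) 1"
    using C.funpow_one_mod_derived_ord by (simp add: derived_iter_Suc)
  show "chain_size (j + 2) dvd chain_size j"
    using C.derived_ord_dvd_n sizes by (simp add: derived_iter_Suc)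
qed

lemma chain_orbit_mod_auto_order:
  assumes n2: "2 \<le> n" and "j \<le> complexity n \<phi>" "even (complexity n \<phi> - j)"
  shows "auto_order n \<phi> dvd chain_size j \<and> (\<forall>a. (chain_map j ^^ a) 1 mod auto_order n \<phi> = 1)"
proof -
  let ?c = "complexity n \<phi>"
  obtain k where "j = ?c - 2 * k" "2 * k \<le> ?c"
    using assms(2,3) by (metis diff_diff_cancel diff_le_self evenE)
  then show ?thesis
  proof (induction k arbitrary: j)
    case 0
    interpret C: skew "chain_size ?c" "chain_map ?c" by (rule skew_chain)
    have "C.ord = 1" using chain_size_complexity(2)[OF n2] by (simp add: derived_iter_Suc)
    then have "(chain_map ?c ^^ a) 1 = 1" for a
      using C.ord_eq_1_iff chain_size_complexity(1)[OF n2] by (induction a) auto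
    then show ?case using 0 chain_size_complexity(1)[OF n2] by (simp add: auto_order_def)
  next
    case (Suc k)
    then have "j + 2 \<le> ?c" "?c - 2 * k = j + 2" by simp_all
    with Suc.IH[of "j + 2"] have IH: "auto_order n \<phi> dvd chain_size (j + 2)"
      "(chain_map (j + 2) ^^ a) 1 mod auto_order n \<phi> = 1" for a
      by auto
    have "(chain_map j ^^ a) 1 mod auto_order n \<phi> = 1" for a
    proof -
      have "(chain_map j ^^ a) 1 mod auto_order n \<phi>
          = (chain_map j ^^ a) 1 mod chain_size (j + 2) mod auto_order n \<phi>"
        using IH(1) by (simp add: mod_mod_cancel)
      then show ?thesis using chain_two_steps(1)[OF n2 \<open>j + 2 \<le> ?c\<close>, of a] IH(2) by simp
    qed
    then show ?case using IH(1) chain_two_steps(2)[OF n2 \<open>j + 2 \<le> ?c\<close>] dvd_trans by blast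
  qed
qed

lemma derived_orbit_mod_auto_order:
  assumes "2 \<le> n" "odd (complexity n \<phi>)"
  shows "(\<phi>' ^^ a) 1 mod auto_order n \<phi> = 1"
  using chain_orbit_mod_auto_order[of 1] odd_pos[OF assms(2)] assms by (simp add: derived_iter_Suc)

lemma ord_ge_2_if_odd_complexity: "2 \<le> n \<Longrightarrow> odd (complexity n \<phi>) \<Longrightarrow> 2 \<le> ord"
  using chain_size_ge_2[of 1] odd_pos[of "complexity n \<phi>"] by (simp add: derived_iter_Suc)

end

theorem theorem4p4:
  fixes n :: nat and \<phi> \<psi> :: "nat \<Rightarrow> nat"
  assumes "2 \<le> n"
    and "skew_morphism n \<phi>" and "odd (complexity n \<phi>)"
    and "skew_morphism n \<psi>" and "odd (complexity n \<psi>)"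
    and "\<psi> 1 = \<phi> 1"
    and "skew_ord n \<psi> = skew_ord n \<phi>"
    and "\<forall>a < skew_ord n \<phi>. derived n \<psi> a = derived n \<phi> a"
    and "\<forall>x < n. (\<psi> ^^ auto_order n \<phi>) x = (\<phi> ^^ auto_order n \<phi>) x"
  shows "\<forall>x < n. \<psi> x = \<phi> x"
proof -
  interpret \<Phi>: skew n \<phi> by (rule skew.intro) (rule assms(2))
  interpret \<Psi>: skew n \<psi> by (rule skew.intro) (rule assms(4))
  have ord2: "2 \<le> skew_ord n \<phi>" using \<Phi>.ord_ge_2_if_odd_complexity assms(1,3) .
  have same_orbit: "(derived n \<psi> ^^ i) 1 = (derived n \<phi> ^^ i) 1" for i
    by (rule funpow_eq_on_invariant[of "{..<skew_ord n \<phi>}"])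
      (use assms(1,8) \<Phi>.derived_less ord2 in auto)
  have "(\<psi> ^^ (derived n \<phi> ^^ i) 1) 1 = (\<phi> ^^ (derived n \<phi> ^^ i) 1) 1" for i
    by (rule funpow_eq_if_mod_eq_1[OF assms(9)])
      (use assms(1,6) \<Phi>.less_n \<Phi>.derived_orbit_mod_auto_order[OF assms(1,3)] in auto)
  then show ?thesis
    using \<Phi>.eq_sum_derived_orbit \<Psi>.eq_sum_derived_orbit assms(1,7) ord2 same_orbit by simp
qed

end
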